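(* Suppose each $f_v$ is $K_v$-Lipschitz and let $\bar K=\frac1{rn}\sum_vK_v$. If $T$ is sampled uniformly from all subsets of $V(G)$ of size $pn$, then $|\mathbb E_T(\xi)|\le\frac{\bar K}{rn-1}$.
   Context: Let $n,p,q$ be positive integers, $r=p+q$, $G$ a finite simple graph with $|V(G)|=rn$ and no isolated vertices; $\mathcal N(v)$, $d(v)$ neighbor set and degree. For each $v$, $f_v:2^{\mathcal N(v)}\to\mathbb R$ with $f_v(\emptyset)=0$. $\sigma_T(v)=q$ if $v\in T$, $-p$ otherwise; for $|T|=pn$, $\xi=\frac1{pqn}\sum_v\sigma_T(v)f_v(T\cap\mathcal N(v))$. $f_v$ is $K_v$-Lipschitz ($K_v>0$) if $|f_v(A)-f_v(A')|\le K_v|A\triangle A'|/d(v)$ for all $A,A'\subseteq\mathcal N(v)$. *)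

theory Defs
  imports Complex_Main
begin

definition simple_graph :: "'a set \<Rightarrow> ('a \<Rightarrow> 'a \<Rightarrow> bool) \<Rightarrow> bool" where
  "simple_graph V E \<longleftrightarrow> finite V \<and> (\<forall>u v. E u v \<longrightarrow> E v u) \<and> (\<forall>v. \<not> E v v)
     \<and> (\<forall>u v. E u v \<longrightarrow> u \<in> V \<and> v \<in> V)"

definition nbhd :: "'a set \<Rightarrow> ('a \<Rightarrow> 'a \<Rightarrow> bool) \<Rightarrow> 'a \<Rightarrow> 'a set" where
  "nbhd V E v = {u \<in> V. E v u}"

definition deg :: "'a set \<Rightarrow> ('a \<Rightarrow> 'a \<Rightarrow> bool) \<Rightarrow> 'a \<Rightarrow> nat" where
  "deg V E v = card (nbhd V E v)"

definition lipschitz_loc :: "'a set \<Rightarrow> ('a \<Rightarrow> 'a \<Rightarrow> bool) \<Rightarrow> 'a \<Rightarrow> ('a set \<Rightarrow> real) \<Rightarrow> real \<Rightarrow> bool" where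
  "lipschitz_loc V E v g K \<longleftrightarrow> K > 0 \<and>
     (\<forall>A A'. A \<subseteq> nbhd V E v \<longrightarrow> A' \<subseteq> nbhd V E v \<longrightarrow>
        \<bar>g A - g A'\<bar> \<le> K * real (card (A - A' \<union> (A' - A))) / real (deg V E v))"

definition sigma :: "nat \<Rightarrow> nat \<Rightarrow> 'a set \<Rightarrow> 'a \<Rightarrow> real" where
  "sigma p q T v = (if v \<in> T then real q else - real p)"

definition xi :: "'a set \<Rightarrow> ('a \<Rightarrow> 'a \<Rightarrow> bool) \<Rightarrow> nat \<Rightarrow> nat \<Rightarrow> nat \<Rightarrow> ('a \<Rightarrow> 'a set \<Rightarrow> real) \<Rightarrow> 'a set \<Rightarrow> real" where
  "xi V E n p q f T = (1 / (real p * real q * real n)) *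
     (\<Sum>v\<in>V. sigma p q T v * f v (T \<inter> nbhd V E v))"

definition unif_expect :: "'a set \<Rightarrow> nat \<Rightarrow> ('a set \<Rightarrow> real) \<Rightarrow> real" where
  "unif_expect V k F = (\<Sum>T\<in>{T. T \<subseteq> V \<and> card T = k}. F T) / real (card {T. T \<subseteq> V \<and> card T = k})"

end

theory Submission
  imports Defs
begin

text \<open>
  Write \<open>T\<close> of size \<open>j + 1 = pn\<close> and split \<open>\<Sum>\<^sub>T \<sigma>\<^sub>T(v) f\<^sub>v(T \<inter> N(v))\<close> according to whether
  \<open>v \<in> T\<close>: it becomes \<open>q X\<^sub>v - p Y\<^sub>v\<close>, with \<open>X\<^sub>v\<close>, \<open>Y\<^sub>v\<close> the sums of \<open>f\<^sub>v(S \<inter> N(v))\<close> over the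
  \<open>j\<close>- resp. \<open>(j+1)\<close>-subsets \<open>S\<close> of \<open>V - {v}\<close>. Counting pairs \<open>(S, u)\<close> with \<open>u \<in> S\<close> shows that
  \<open>n (q X\<^sub>v - p Y\<^sub>v)\<close> is a sum of the increments \<open>f\<^sub>v((S - {u}) \<inter> N(v)) - f\<^sub>v(S \<inter> N(v))\<close>, each
  at most \<open>K\<^sub>v / d(v)\<close> and nonzero only for \<open>u \<in> N(v)\<close>; hence \<open>|q X\<^sub>v - p Y\<^sub>v| \<le> K\<^sub>v C(rn-2, j) / n\<close>,
  and binomial absorption turns the normalisation into \<open>1 / (rn (rn - 1))\<close>.
\<close>

abbreviation ksubsets :: "'a set \<Rightarrow> nat \<Rightarrow> 'a set set" where
  "ksubsets W k \<equiv> {S. S \<subseteq> W \<and> card S = k}"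

lemma bij_betw_insert_ksubsets:
  assumes "finite A" "u \<in> A"
  shows "bij_betw (insert u) (ksubsets (A - {u}) j) {S \<in> ksubsets A (Suc j). u \<in> S}"
proof (rule bij_betw_byWitness[where f' = "\<lambda>S. S - {u}"])
  show "insert u ` ksubsets (A - {u}) j \<subseteq> {S \<in> ksubsets A (Suc j). u \<in> S}"
    using assms by (auto simp: card_insert_if finite_subset)
  show "(\<lambda>S. S - {u}) ` {S \<in> ksubsets A (Suc j). u \<in> S} \<subseteq> ksubsets (A - {u}) j"
    using assms by (auto simp: finite_subset)
qed auto

lemma card_ksubsets_containing:
  assumes "finite A" "u \<in> A"
  shows "card {S \<in> ksubsets A (Suc j). u \<in> S} = (card A - 1) choose j"
proof -
  have "card {S \<in> ksubsets A (Suc j). u \<in> S} = card (ksubsets (A - {u}) j)"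
    using bij_betw_same_card[OF bij_betw_insert_ksubsets[OF assms]] by simp
  also have "\<dots> = card (A - {u}) choose j"
    using assms(1) by (simp add: n_subsets)
  finally show ?thesis
    using assms by simp
qed

lemma sum_ksubsets_remove_one:
  fixes h :: "'a set \<Rightarrow> 'b::comm_semiring_1"
  assumes "finite W"
  shows "(\<Sum>S\<in>ksubsets W (Suc j). \<Sum>u\<in>S. h (S - {u}))
       = (\<Sum>R\<in>ksubsets W j. of_nat (card W - j) * h R)"
proof -
  let ?P = "Sigma (ksubsets W j) (\<lambda>R. W - R)"
  let ?Q = "Sigma (ksubsets W (Suc j)) (\<lambda>S. S)"
  have bij: "bij_betw (\<lambda>(R, u). (insert u R, u)) ?P ?Q"
  proof (rule bij_betw_byWitness[where f' = "\<lambda>(S, u). (S - {u}, u)"])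
    show "(\<lambda>(R, u). (insert u R, u)) ` ?P \<subseteq> ?Q"
      using assms by (auto simp: card_insert_if finite_subset)
    show "(\<lambda>(S, u). (S - {u}, u)) ` ?Q \<subseteq> ?P"
      using assms by (auto simp: finite_subset)
  qed auto
  have "(\<Sum>S\<in>ksubsets W (Suc j). \<Sum>u\<in>S. h (S - {u})) = (\<Sum>(S, u)\<in>?Q. h (S - {u}))"
    by (rule sum.Sigma) (use assms finite_subset in auto)
  also have "\<dots> = (\<Sum>(R, u)\<in>?P. h R)"
    by (subst sum.reindex_bij_betw[OF bij, symmetric]) (auto intro: sum.cong)
  also have "\<dots> = (\<Sum>R\<in>ksubsets W j. \<Sum>u\<in>W - R. h R)"
    by (rule sum.Sigma[symmetric]) (use assms in auto)
  also have "\<dots> = (\<Sum>R\<in>ksubsets W j. of_nat (card W - j) * h R)"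
    using assms by (intro sum.cong) (auto simp: card_Diff_subset finite_subset)
  finally show ?thesis .
qed

lemma sum_card_inter_ksubsets:
  assumes "finite W" "B \<subseteq> W"
  shows "(\<Sum>S\<in>ksubsets W (Suc j). card (S \<inter> B)) = card B * ((card W - 1) choose j)"
proof -
  have "(\<Sum>S\<in>ksubsets W (Suc j). card (S \<inter> B))
      = (\<Sum>S\<in>ksubsets W (Suc j). \<Sum>u\<in>B. of_bool (u \<in> S))"
    using assms by (intro sum.cong) (auto simp: Int_commute finite_subset)
  also have "\<dots> = (\<Sum>u\<in>B. card {S \<in> ksubsets W (Suc j). u \<in> S})"
    using assms(1) by (subst sum.swap) (simp add: Int_def conj_commute)
  also have "\<dots> = (\<Sum>u\<in>B. (card W - 1) choose j)"
    using assms card_ksubsets_containing[OF assms(1)] by (intro sum.cong) auto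
  also have "\<dots> = card B * ((card W - 1) choose j)"
    by simp
  finally show ?thesis .
qed

lemma abs_diff_ksubset_sums_le:
  fixes g :: "'a set \<Rightarrow> real"
  assumes "finite W" "B \<subseteq> W"
    and step: "\<And>A u. A \<subseteq> B \<Longrightarrow> u \<in> A \<Longrightarrow> \<bar>g (A - {u}) - g A\<bar> \<le> L"
  shows "\<bar>real (card W - j) * (\<Sum>R\<in>ksubsets W j. g (R \<inter> B))
           - real (Suc j) * (\<Sum>S\<in>ksubsets W (Suc j). g (S \<inter> B))\<bar>
         \<le> L * real (card B * ((card W - 1) choose j))"
proof -
  let ?F = "ksubsets W (Suc j)"
  have increment: "\<bar>g ((S - {u}) \<inter> B) - g (S \<inter> B)\<bar> \<le> L * of_bool (u \<in> B)" if "u \<in> S" for S u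
  proof -
    have "(S - {u}) \<inter> B = S \<inter> B - {u}"
      by auto
    then show ?thesis
      using step[of "S \<inter> B" u] that by (cases "u \<in> B") auto
  qed
  have "real (card W - j) * (\<Sum>R\<in>ksubsets W j. g (R \<inter> B))
          - real (Suc j) * (\<Sum>S\<in>?F. g (S \<inter> B))
      = (\<Sum>S\<in>?F. \<Sum>u\<in>S. g ((S - {u}) \<inter> B) - g (S \<inter> B))"
    using sum_ksubsets_remove_one[OF assms(1), of "\<lambda>R. g (R \<inter> B)" j]
    by (simp add: sum_subtractf sum_distrib_left)
  also have "\<bar>\<dots>\<bar> \<le> (\<Sum>S\<in>?F. \<Sum>u\<in>S. L * of_bool (u \<in> B))"
    using increment by (intro order_trans[OF sum_abs] sum_mono order_trans[OF sum_abs]) auto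
  also have "\<dots> = L * (\<Sum>S\<in>?F. card (S \<inter> B))"
    using assms(1) by (simp add: sum_distrib_left) (intro sum.cong, auto simp: finite_subset Int_def)
  also have "\<dots> = L * real (card B * ((card W - 1) choose j))"
    using sum_card_inter_ksubsets[OF assms(1,2)] by simp
  finally show ?thesis .
qed

lemma sum_sigma_ksubsets:
  fixes g :: "'a set \<Rightarrow> real"
  assumes "finite V" "v \<in> V" "v \<notin> B"
  shows "(\<Sum>T\<in>ksubsets V (Suc j). sigma p q T v * g (T \<inter> B))
       = real q * (\<Sum>R\<in>ksubsets (V - {v}) j. g (R \<inter> B))
         - real p * (\<Sum>S\<in>ksubsets (V - {v}) (Suc j). g (S \<inter> B))"
proof -
  let ?F = "ksubsets V (Suc j)"
  have "(\<Sum>T\<in>?F. sigma p q T v * g (T \<inter> B))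
      = (\<Sum>T\<in>?F. if v \<in> T then real q * g (T \<inter> B) else - (real p * g (T \<inter> B)))"
    by (intro sum.cong) (auto simp: sigma_def)
  also have "\<dots> = (\<Sum>T\<in>?F \<inter> {T. v \<in> T}. real q * g (T \<inter> B))
      - (\<Sum>T\<in>?F \<inter> - {T. v \<in> T}. real p * g (T \<inter> B))"
    using assms(1) by (simp add: sum.If_cases sum_negf)
  also have "(\<Sum>T\<in>?F \<inter> {T. v \<in> T}. real q * g (T \<inter> B))
      = (\<Sum>R\<in>ksubsets (V - {v}) j. real q * g (insert v R \<inter> B))"
  proof -
    have "?F \<inter> {T. v \<in> T} = {S \<in> ?F. v \<in> S}"
      by auto
    then show ?thesis
      by (simp only:) (rule sum.reindex_bij_betw[OF bij_betw_insert_ksubsets[OF assms(1,2)], symmetric])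
  qed
  also have "?F \<inter> - {T. v \<in> T} = ksubsets (V - {v}) (Suc j)"
    by auto
  finally show ?thesis
    using assms(3) by (simp add: sum_distrib_left)
qed

lemma binomial_absorption_twice:
  "real (Suc j) * real (N - Suc j) * real (N choose Suc j)
     = real N * (real N - 1) * real ((N - 2) choose j)"
proof -
  have "Suc j * (N choose Suc j) = N * ((N - 1) choose j)"
    by (rule binomial_absorption)
  moreover have "(N - Suc j) * ((N - 1) choose j) = (N - 1) * ((N - 2) choose j)"
    using binomial_absorb_comp[of "N - 1" j] by (simp add: numeral_2_eq_2)
  ultimately have "Suc j * (N - Suc j) * (N choose Suc j) = N * (N - 1) * ((N - 2) choose j)"
    by (metis mult.assoc mult.left_commute)
  then have "real (Suc j) * real (N - Suc j) * real (N choose Suc j)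
      = real N * real (N - 1) * real ((N - 2) choose j)"
    by (simp only: of_nat_eq_iff flip: of_nat_mult)
  then show ?thesis
    by (cases "N = 0") simp_all
qed

lemma unif_expect_xi_eq:
  assumes "simple_graph V E"
  shows "unif_expect V (Suc j) (xi V E n p q f)
       = (\<Sum>v\<in>V. real q * (\<Sum>R\<in>ksubsets (V - {v}) j. f v (R \<inter> nbhd V E v))
                 - real p * (\<Sum>S\<in>ksubsets (V - {v}) (Suc j). f v (S \<inter> nbhd V E v)))
         / (real p * real q * real n * real (card V choose Suc j))"
proof -
  have fin: "finite V" and loopless: "\<And>v. v \<notin> nbhd V E v"
    using assms by (auto simp: simple_graph_def nbhd_def)
  have "(\<Sum>T\<in>ksubsets V (Suc j). xi V E n p q f T)
      = (\<Sum>T\<in>ksubsets V (Suc j). \<Sum>v\<in>V. sigma p q T v * f v (T \<inter> nbhd V E v))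
        / (real p * real q * real n)"
    unfolding xi_def by (simp add: sum_divide_distrib)
  also have "\<dots> = (\<Sum>v\<in>V. \<Sum>T\<in>ksubsets V (Suc j). sigma p q T v * f v (T \<inter> nbhd V E v))
        / (real p * real q * real n)"
    by (subst sum.swap) (rule refl)
  also have "(\<Sum>v\<in>V. \<Sum>T\<in>ksubsets V (Suc j). sigma p q T v * f v (T \<inter> nbhd V E v))
      = (\<Sum>v\<in>V. real q * (\<Sum>R\<in>ksubsets (V - {v}) j. f v (R \<inter> nbhd V E v))
                 - real p * (\<Sum>S\<in>ksubsets (V - {v}) (Suc j). f v (S \<inter> nbhd V E v)))"
    by (rule sum.cong[OF refl], rule sum_sigma_ksubsets[OF fin _ loopless])
  finally have sum_xi: "(\<Sum>T\<in>ksubsets V (Suc j). xi V E n p q f T)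
      = (\<Sum>v\<in>V. real q * (\<Sum>R\<in>ksubsets (V - {v}) j. f v (R \<inter> nbhd V E v))
                 - real p * (\<Sum>S\<in>ksubsets (V - {v}) (Suc j). f v (S \<inter> nbhd V E v)))
        / (real p * real q * real n)" .
  show ?thesis
    unfolding unif_expect_def sum_xi n_subsets[OF fin] divide_divide_eq_left ..
qed

lemma abs_xi_vertex_term_le:
  fixes g :: "'a set \<Rightarrow> real"
  assumes "simple_graph V E" "v \<in> V" "nbhd V E v \<noteq> {}" "lipschitz_loc V E v g K"
  shows "\<bar>real (card V - Suc j) * (\<Sum>R\<in>ksubsets (V - {v}) j. g (R \<inter> nbhd V E v))
           - real (Suc j) * (\<Sum>S\<in>ksubsets (V - {v}) (Suc j). g (S \<inter> nbhd V E v))\<bar>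
         \<le> K * real ((card V - 2) choose j)"
proof -
  let ?B = "nbhd V E v"
  have fin: "finite V" and sub: "?B \<subseteq> V - {v}"
    using assms(1) by (auto simp: simple_graph_def nbhd_def)
  have deg_pos: "deg V E v > 0"
    using assms(3) fin by (simp add: deg_def nbhd_def card_gt_0_iff)
  have step: "\<bar>g (A - {u}) - g A\<bar> \<le> K / real (deg V E v)" if "A \<subseteq> ?B" "u \<in> A" for A u
  proof -
    have "\<bar>g (A - {u}) - g A\<bar> \<le> K * real (card (A - {u} - A \<union> (A - (A - {u})))) / real (deg V E v)"
      using assms(4) that(1) unfolding lipschitz_loc_def by (meson Diff_subset order_trans)
    also have "A - {u} - A \<union> (A - (A - {u})) = {u}"
      using that(2) by auto
    finally show ?thesis
      by simp
  qed
  have "card (V - {v}) - j = card V - Suc j" "card (V - {v}) - 1 = card V - 2"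
    using fin assms(2) by auto
  then show ?thesis
    using abs_diff_ksubset_sums_le[where L = "K / real (deg V E v)" and j = j, OF finite_Diff[OF fin] sub step] deg_pos
    by (simp add: deg_def)
qed

lemma abs_unif_expect_xi_le:
  assumes "simple_graph V E" "\<forall>v\<in>V. nbhd V E v \<noteq> {}" "\<forall>v\<in>V. lipschitz_loc V E v (f v) (K v)"
    and "n > 0" "p * n = Suc j" "q * n = card V - Suc j"
  shows "\<bar>unif_expect V (Suc j) (xi V E n p q f)\<bar>
       \<le> (\<Sum>v\<in>V. K v) * real ((card V - 2) choose j)
         / (real (p * n) * real (q * n) * real (card V choose Suc j))"
proof -
  define D where "D v = real q * (\<Sum>R\<in>ksubsets (V - {v}) j. f v (R \<inter> nbhd V E v))
      - real p * (\<Sum>S\<in>ksubsets (V - {v}) (Suc j). f v (S \<inter> nbhd V E v))" for v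
  have D_le: "\<bar>D v\<bar> \<le> K v * real ((card V - 2) choose j) / real n" if "v \<in> V" for v
  proof -
    have "real (card V - Suc j) = real q * real n" "real (Suc j) = real p * real n"
      using assms(5,6) by (metis of_nat_mult)+
    then have "real n * D v = real (card V - Suc j) * (\<Sum>R\<in>ksubsets (V - {v}) j. f v (R \<inter> nbhd V E v))
        - real (Suc j) * (\<Sum>S\<in>ksubsets (V - {v}) (Suc j). f v (S \<inter> nbhd V E v))"
      by (simp add: D_def algebra_simps)
    then have "real n * \<bar>D v\<bar> \<le> K v * real ((card V - 2) choose j)"
      using abs_xi_vertex_term_le[OF assms(1) that, of "f v" "K v" j] assms(2,3) that
      by (simp add: abs_mult[symmetric])
    then show ?thesis
      using assms(4) by (simp add: field_simps)
  qed
  have "\<bar>unif_expect V (Suc j) (xi V E n p q f)\<bar>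
      = \<bar>\<Sum>v\<in>V. D v\<bar> / (real p * real q * real n * real (card V choose Suc j))"
    unfolding unif_expect_xi_eq[OF assms(1)] by (simp add: D_def)
  also have "\<dots> \<le> (\<Sum>v\<in>V. K v * real ((card V - 2) choose j) / real n)
      / (real p * real q * real n * real (card V choose Suc j))"
    using D_le by (intro divide_right_mono order_trans[OF sum_abs sum_mono]) auto
  also have "\<dots> = (\<Sum>v\<in>V. K v) * real ((card V - 2) choose j)
      / (real (p * n) * real (q * n) * real (card V choose Suc j))"
    by (simp add: sum_distrib_right sum_divide_distrib mult_ac)
  finally show ?thesis .
qed

theorem mainTheorem13:
  fixes V :: "'a set" and E :: "'a \<Rightarrow> 'a \<Rightarrow> bool" and n p q :: nat
    and f :: "'a \<Rightarrow> 'a set \<Rightarrow> real" and K :: "'a \<Rightarrow> real"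
  assumes "n > 0" and "p > 0" and "q > 0"
    and "simple_graph V E"
    and "card V = (p + q) * n"
    and "\<forall>v\<in>V. nbhd V E v \<noteq> {}"
    and "\<forall>v\<in>V. f v {} = 0"
    and "\<forall>v\<in>V. lipschitz_loc V E v (f v) (K v)"
  shows "\<bar>unif_expect V (p * n) (xi V E n p q f)\<bar>
           \<le> ((\<Sum>v\<in>V. K v) / real ((p + q) * n)) / (real ((p + q) * n) - 1)"
proof -
  define N where "N = (p + q) * n"
  have card_V: "card V = N"
    using assms(5) by (simp add: N_def)
  obtain j where j: "p * n = Suc j"
    using assms(1,2) by (metis gr0_implies_Suc nat_0_less_mult_iff)
  have rest: "q * n = N - Suc j" and "q * n \<ge> 1"
    using j assms(1,3) by (simp_all add: N_def algebra_simps)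
  then have C_pos: "(N - 2) choose j > 0"
    by simp
  have "\<bar>unif_expect V (p * n) (xi V E n p q f)\<bar>
      \<le> (\<Sum>v\<in>V. K v) * real ((N - 2) choose j) / (real (p * n) * real (q * n) * real (N choose Suc j))"
    using abs_unif_expect_xi_le[OF assms(4,6,8,1) j] rest unfolding j card_V .
  also have "\<dots> = ((\<Sum>v\<in>V. K v) / real N) / (real N - 1)"
    unfolding j rest binomial_absorption_twice using C_pos by simp
  finally show ?thesis
    unfolding N_def .
qed

end
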